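(* Let $p\ge 5$ be a prime with $p\equiv 5\pmod 6$, $K$ a field of characteristic $p$, and let $c_2(r)\in\mathbb F_p[r]$ be the coefficient of $x^{2p-1}y^{p-1}z^{p-2}$ in $(x^3z+y^4+ry^2z^2+z^4)^{p-1}$. Then $c_2(r)$ has a root $r\in\overline K$ with $r\neq 0,\pm 2$ if and only if $p\ge 17$. *)

theory Defs
  imports "HOL-Algebra.Algebraic_Closure_Type"
begin

text \<open>Polynomials in x,y,z,r are represented as nested univariate polynomials:
  outermost variable x, then y, then z, innermost r (coefficients in 'a).\<close>

definition var_r :: "'a::comm_ring_1 poly poly poly poly" where
  "var_r = [:[:[:[:0, 1:]:]:]:]"

definition var_z :: "'a::comm_ring_1 poly poly poly poly" where
  "var_z = [:[:[:0, 1:]:]:]"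

definition var_y :: "'a::comm_ring_1 poly poly poly poly" where
  "var_y = [:[:0, 1:]:]"

definition var_x :: "'a::comm_ring_1 poly poly poly poly" where
  "var_x = [:0, 1:]"

definition quartic_form :: "'a::comm_ring_1 poly poly poly poly" where
  "quartic_form = var_x ^ 3 * var_z + var_y ^ 4 + var_r * var_y ^ 2 * var_z ^ 2 + var_z ^ 4"

definition c2 :: "nat \<Rightarrow> 'a::comm_ring_1 poly" where
  "c2 p = coeff (coeff (coeff (quartic_form ^ (p - 1)) (2 * p - 1)) (p - 1)) (p - 2)"

end

theory Submission
  imports Defs
begin

text \<open>
  Write p = 6k + 5 and m = k div 2. Only the terms (x^3 z)^(4k+3) of the multinomial expansion
  reach x^(2p-1), and expanding the remaining factor (y^4 + r y^2 z^2 + z^4)^(2k+1) gives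
  c2(r) = sum_(d <= m) E_d r^(k-2d) with E_d = C(6k+4,4k+3) C(2k+1,d) C(2k+1-d,k+1+d).
  These binomial coefficients have arguments below p, so every E_d is a unit mod p, and
  c2(r) = r^(k mod 2) G(r^2) with deg G = m and G(0) /= 0. For p < 17 we have m = 0, and c2 is a
  nonzero monomial. For p >= 17, if 4 were the only root of G, then G = E_0 (s - 4)^m, and
  comparing the coefficients of s^(m-1) gives E_1 = -4m E_0; together with (k+2) E_1 = k(k-1) E_0
  this makes p divide k(k-1) + 4m(k+2), which is 3k(k+1) or (k-1)(3k+4) and hence prime to p.
  So G has a root s other than 0 and 4, and a square root of s is a root of c2 other than 0, 2, -2.
\<close>

lemma coeff_monom_plus_const_power:
  fixes u v :: "'a::comm_ring_1"
  assumes "e > 0"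
  shows "coeff ((monom u e + [:v:]) ^ n) (e * i) = of_nat (n choose i) * u ^ i * v ^ (n - i)"
proof -
  have "(monom u e + [:v:]) ^ n =
      (\<Sum>j\<le>n. monom (of_nat (n choose j) * u ^ j * v ^ (n - j)) (e * j))"
    unfolding binomial_ring
    by (intro sum.cong refl)
      (simp add: monom_power poly_const_pow of_nat_poly mult_monom mult.commute flip: monom_0)
  then have "coeff ((monom u e + [:v:]) ^ n) (e * i) =
      (\<Sum>j\<le>n. if j = i then of_nat (n choose j) * u ^ j * v ^ (n - j) else 0)"
    using assms by (simp add: coeff_sum coeff_monom)
  also have "\<dots> = of_nat (n choose i) * u ^ i * v ^ (n - i)"
    by (auto simp: binomial_eq_0)
  finally show ?thesis .
qed

lemma prime_not_dvd_choose:
  assumes "prime p" and "n < p" and "i \<le> n"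
  shows "\<not> p dvd (n choose i)"
proof
  assume "p dvd (n choose i)"
  then have "p dvd fact n" using binomial_fact_lemma[OF assms(3)] by (metis dvd_mult)
  with assms show False by (simp add: prime_dvd_fact_iff)
qed

lemma coeff_pred_degree_of_unique_root:
  fixes P :: "'a::alg_closed_field poly"
  assumes "degree P = Suc n" and "\<And>x. poly P x = 0 \<Longrightarrow> x = a"
  shows "coeff P n = - (of_nat (Suc n) * a * lead_coeff P)"
proof -
  have "P \<noteq> 0" using assms(1) by auto
  then obtain A where A: "size A = Suc n" "P = smult (lead_coeff P) (\<Prod>x\<in>#A. [:-x, 1:])"
    using alg_closed_imp_factorization assms(1) by metis
  have "set_mset A \<subseteq> {a}"
  proof
    fix x assume "x \<in># A"
    then have "poly P x = 0" by (subst A(2)) (auto simp: poly_prod_mset prod_mset_zero_iff)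
    then show "x \<in> {a}" using assms(2) by simp
  qed
  then have "A = replicate_mset (Suc n) a" using set_mset_subset_singletonD A(1) by metis
  then have P_eq: "P = smult (lead_coeff P) ([:-a, 1:] ^ Suc n)" using A(2) by simp
  show ?thesis by (subst (1) P_eq) (simp add: coeff_linear_poly_power del: power_Suc)
qed

text \<open>The x-free part y^4 + r y^2 z^2 + z^4 of the quartic, written as z^4 + y^2 (y^2 + r z^2)
  in 'a[r][z][y].\<close>

definition quartic_yz :: "'a::comm_ring_1 poly poly poly" where
  "quartic_yz = [:monom 1 4:] + monom 1 2 * (monom 1 2 + [:monom [:0, 1:] 2:])"

lemma quartic_form_eq: "quartic_form = monom [:monom 1 1:] 3 + [:quartic_yz:]"
  by (simp add: quartic_form_def quartic_yz_def var_x_def var_y_def var_z_def var_r_def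
      monom_altdef poly_const_pow mult_to_poly algebra_simps flip: power_add)

lemma coeff_quartic_yz_binomial_term:
  fixes k d :: nat
  defines "N \<equiv> 2*k+1"
  assumes "d \<le> N"
  shows "coeff (monom (of_nat (N choose d) * monom 1 (4*d)) (2*(N-d)) *
           (monom 1 2 + [:monom [:0, 1:] 2:]) ^ (N-d)) (6*k+4) =
         monom (monom (of_nat ((N choose d) * (N-d choose (k+1+d))) :: 'a::comm_ring_1) (k - 2*d))
           (2*k)"
proof -
  have deg: "6*k+4 = 2*(N-d) + 2*(k+1+d)" and exp: "N-d - (k+1+d) = k - 2*d"
    using assms(2) by (simp_all add: N_def)
  have power_coeff: "coeff ((monom 1 2 + [:monom [:0, 1:] 2:]) ^ (N-d)) (2*(k+1+d)) =
      of_nat (N-d choose (k+1+d)) * (monom ([:0, 1:] ^ (k - 2*d)) (2*(k - 2*d)) :: 'a poly poly)"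
    unfolding coeff_monom_plus_const_power[OF pos2] exp by (simp add: monom_power)
  show ?thesis
  proof (cases "d \<le> k div 2")
    case True
    then have "4*d + 2*(k - 2*d) = 2*k" by presburger
    with power_coeff show ?thesis unfolding deg coeff_monom_mult
      by (simp add: of_nat_monom mult_monom monom_altdef flip: power_add)
  next
    case False
    then have "N-d choose (k+1+d) = 0" by (simp add: N_def binomial_eq_0)
    then show ?thesis using power_coeff unfolding deg coeff_monom_mult by (simp only:) simp
  qed
qed

lemma coeff_quartic_yz_power:
  "coeff ((quartic_yz :: 'a::comm_ring_1 poly poly poly) ^ (2*k+1)) (6*k+4) =
     monom (\<Sum>d\<le>k div 2. monom (of_nat ((2*k+1 choose d) * (2*k+1-d choose (k+1+d)))) (k - 2*d))
       (2*k)"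
proof -
  define N where "N = 2*k+1"
  define W :: "'a poly poly poly" where "W = monom 1 2 + [:monom [:0, 1:] 2:]"
  define c :: "nat \<Rightarrow> 'a" where "c d = of_nat ((N choose d) * (N-d choose (k+1+d)))" for d
  have vanish: "c d = 0" if "k div 2 < d" for d
    using that by (simp add: c_def N_def binomial_eq_0)
  have expand: "quartic_yz ^ N =
      (\<Sum>d\<le>N. monom (of_nat (N choose d) * monom 1 (4*d)) (2*(N-d)) * W ^ (N-d))"
    unfolding quartic_yz_def W_def[symmetric] binomial_ring
    by (intro sum.cong refl) (simp add: poly_const_pow of_nat_poly power_mult_distrib monom_power
        monom_0 mult_monom mult.commute[of "W ^ _"] smult_monom_mult)
  have "coeff (quartic_yz ^ N) (6*k+4) = (\<Sum>d\<le>N. monom (monom (c d) (k - 2*d)) (2*k))"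
    unfolding expand unfolding coeff_sum W_def c_def N_def
    by (intro sum.cong refl coeff_quartic_yz_binomial_term) simp
  also have "\<dots> = (\<Sum>d\<le>k div 2. monom (monom (c d) (k - 2*d)) (2*k))"
    by (rule sum.mono_neutral_right) (auto simp: N_def vanish)
  finally show ?thesis by (simp add: monom_sum c_def N_def)
qed

definition c2_coeff :: "nat \<Rightarrow> nat \<Rightarrow> nat" where
  "c2_coeff k d = (6*k+4 choose (4*k+3)) * ((2*k+1 choose d) * (2*k+1-d choose (k+1+d)))"

lemma c2_eq:
  "(c2 (6*k+5) :: 'a::comm_ring_1 poly) = (\<Sum>d\<le>k div 2. monom (of_nat (c2_coeff k d)) (k - 2*d))"
proof -
  define C where "C = 6*k+4 choose (4*k+3)"
  have x_coeff: "coeff ((quartic_form :: 'a poly poly poly poly) ^ (6*k+4)) (3*(4*k+3)) =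
      of_nat C * [:monom 1 (4*k+3):] * quartic_yz ^ (2*k+1)"
    unfolding quartic_form_eq coeff_monom_plus_const_power[of 3, simplified]
    by (simp add: C_def monom_power poly_const_pow)
  have "c2 (6*k+5) =
      coeff (coeff (of_nat C * [:monom 1 (4*k+3):] * (quartic_yz :: 'a poly poly poly) ^ (2*k+1))
        (6*k+4)) (6*k+3)"
  proof -
    have exponents: "2*(6*k+5) - 1 = 3*(4*k+3)" "6*k+5 - 1 = 6*k+4" "6*k+5 - 2 = 6*k+3"
      by simp_all
    show ?thesis unfolding c2_def exponents x_coeff ..
  qed
  also have "\<dots> = of_nat C *
      (\<Sum>d\<le>k div 2. monom (of_nat ((2*k+1 choose d) * (2*k+1-d choose (k+1+d)))) (k - 2*d))"
  proof -
    have const_mult: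
      "coeff (of_nat C * [:monom 1 (4*k+3):] * Y) n = of_nat C * monom 1 (4*k+3) * coeff Y n"
      for Y :: "'a poly poly poly" and n
      by (simp add: of_nat_poly)
    show ?thesis
      unfolding const_mult coeff_quartic_yz_power by (simp add: of_nat_poly coeff_monom_mult)
  qed
  finally show ?thesis
    by (simp add: c2_coeff_def C_def sum_distrib_left of_nat_monom mult_monom)
qed

definition c2_reduced :: "nat \<Rightarrow> 'a::comm_ring_1 poly" where
  "c2_reduced k = (\<Sum>d\<le>k div 2. monom (of_nat (c2_coeff k d)) (k div 2 - d))"

lemma poly_c2: "poly (c2 (6*k+5)) r = r ^ (k mod 2) * poly (c2_reduced k) (r\<^sup>2)"
  unfolding c2_eq c2_reduced_def poly_sum poly_monom sum_distrib_left
proof (intro sum.cong refl)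
  fix d assume "d \<in> {..k div 2}"
  then have "k - 2*d = k mod 2 + 2*(k div 2 - d)" by (simp; presburger)
  then show "of_nat (c2_coeff k d) * r ^ (k - 2*d) =
      r ^ (k mod 2) * (of_nat (c2_coeff k d) * (r\<^sup>2) ^ (k div 2 - d))"
    by (simp add: power_add power_mult mult_ac)
qed

lemma coeff_c2_reduced:
  "coeff (c2_reduced k) i = (if i \<le> k div 2 then of_nat (c2_coeff k (k div 2 - i)) else 0)"
proof -
  have "coeff (c2_reduced k) i =
      (\<Sum>d\<le>k div 2. if d = k div 2 - i \<and> i \<le> k div 2 then of_nat (c2_coeff k d) else 0)"
    unfolding c2_reduced_def coeff_sum coeff_monom by (intro sum.cong refl) auto
  also have "\<dots> = (if i \<le> k div 2 then of_nat (c2_coeff k (k div 2 - i)) else 0)"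
    by (cases "i \<le> k div 2") simp_all
  finally show ?thesis .
qed

lemma map_poly_to_ac_c2: "map_poly to_ac (c2 (6*k+5) :: 'a::field poly) = c2 (6*k+5)"
  by (rule poly_eqI)
    (simp add: c2_eq coeff_map_poly coeff_sum to_ac_sum coeff_monom if_distrib[of to_ac] cong: if_cong)

lemma of_nat_c2_coeff_neq_0:
  assumes "prime (6*k+5)" and "CHAR('a::semiring_1) = 6*k+5" and "d \<le> k div 2"
  shows "(of_nat (c2_coeff k d) :: 'a) \<noteq> 0"
proof -
  have "\<not> 6*k+5 dvd (6*k+4 choose (4*k+3))" "\<not> 6*k+5 dvd (2*k+1 choose d)"
    "\<not> 6*k+5 dvd (2*k+1-d choose (k+1+d))"
    using assms(3) by (intro prime_not_dvd_choose[OF assms(1)]; simp)+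
  then have "\<not> 6*k+5 dvd c2_coeff k d"
    unfolding c2_coeff_def using assms(1) by (simp add: prime_dvd_mult_iff)
  then show ?thesis by (simp add: of_nat_eq_0_iff_char_dvd assms(2))
qed

lemma degree_c2_reduced:
  assumes "prime (6*k+5)" and "CHAR('a::field) = 6*k+5"
  shows "degree (c2_reduced k :: 'a poly) = k div 2"
proof (rule antisym)
  show "degree (c2_reduced k :: 'a poly) \<le> k div 2"
    by (rule degree_le) (simp add: coeff_c2_reduced)
  show "k div 2 \<le> degree (c2_reduced k :: 'a poly)"
    by (rule le_degree) (simp add: coeff_c2_reduced of_nat_c2_coeff_neq_0[OF assms])
qed

lemma c2_coeff_1_eq:
  assumes "2 \<le> k"
  shows "c2_coeff k 1 * (k+2) = c2_coeff k 0 * (k * (k-1))"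
proof -
  define C where "C = 6*k+4 choose (4*k+3)"
  have "2*k+1 - (k+2) = k-1" "2*k+1 - 1 = 2*k" "Suc (k+1 + (k-1)) = 2*k+1" "Suc (k+1) = k+2"
    "Suc (k-1) = k" "k+1+1 = k+2"
    using assms by simp_all
  note eqs = this
  have absorb: "(k-1) * (2*k+1 choose (k+2)) = (2*k+1) * (2*k choose (k+2))"
    using binomial_absorb_comp[of "2*k+1" "k+2"] unfolding eqs .
  have shift: "(k+2) * (2*k+1 choose (k+2)) = k * (2*k+1 choose (k+1))"
    using Suc_times_binomial_add[of "k+1" "k-1"] unfolding eqs .
  have "c2_coeff k 1 * (k+2) = C * ((2*k+1) * (2*k choose (k+2)) * (k+2))"
    unfolding c2_coeff_def C_def eqs choose_one by (simp only: mult.assoc)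
  also have "\<dots> = C * ((k-1) * ((k+2) * (2*k+1 choose (k+2))))"
    unfolding absorb[symmetric] by (simp only: mult_ac)
  also have "\<dots> = c2_coeff k 0 * (k * (k-1))"
    unfolding shift c2_coeff_def C_def
    by (simp only: binomial_n_0 diff_zero add_0_right mult_1_left mult_ac)
  finally show ?thesis .
qed

lemma prime_not_dvd_root_4_defect:
  fixes k :: nat
  assumes "prime (6*k+5)" and "2 \<le> k"
  shows "\<not> 6*k+5 dvd k * (k-1) + 4 * (k div 2) * (k+2)"
proof (cases "even k")
  case True
  then have eq: "k * (k-1) + 4 * (k div 2) * (k+2) = 3 * k * (k+1)"
    by (auto elim!: evenE simp: algebra_simps)
  moreover have "\<not> 6*k+5 dvd 3" "\<not> 6*k+5 dvd k" "\<not> 6*k+5 dvd k+1"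
    using assms(2) by (auto dest!: dvd_imp_le)
  ultimately show ?thesis unfolding eq using assms(1) prime_dvd_mult_iff by blast
next
  case False
  then have eq: "k * (k-1) + 4 * (k div 2) * (k+2) = (k-1) * (3*k+4)"
    by (auto elim!: oddE simp: algebra_simps)
  moreover have "\<not> 6*k+5 dvd k-1" "\<not> 6*k+5 dvd 3*k+4"
    using assms(2) by (auto dest!: dvd_imp_le)
  ultimately show ?thesis unfolding eq using assms(1) prime_dvd_mult_iff by blast
qed

lemma poly_c2_reduced_neq_0:
  assumes "prime (6*k+5)" and "CHAR('a::field) = 6*k+5" and "k < 2"
  shows "poly (c2_reduced k :: 'a poly) s \<noteq> 0"
  using assms(3) of_nat_c2_coeff_neq_0[OF assms(1,2), of 0] by (simp add: c2_reduced_def poly_monom)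

lemma c2_reduced_has_root_ne_4:
  assumes "prime (6*k+5)" and "CHAR('a::alg_closed_field) = 6*k+5" and "2 \<le> k"
  shows "\<exists>s::'a. poly (c2_reduced k) s = 0 \<and> s \<noteq> 4"
proof (rule ccontr)
  define m where "m = k div 2"
  define G :: "'a poly" where "G = c2_reduced k"
  define E :: "nat \<Rightarrow> 'a" where "E d = of_nat (c2_coeff k d)" for d
  assume "\<not> (\<exists>s::'a. poly (c2_reduced k) s = 0 \<and> s \<noteq> 4)"
  then have only_4: "s = 4" if "poly G s = 0" for s
    using that by (auto simp: G_def)
  have coeff: "coeff G i = E (m - i)" if "i \<le> m" for i
    using that by (simp add: G_def E_def m_def coeff_c2_reduced)
  obtain t where m: "m = Suc t"
    using assms(3) by (cases m) (auto simp: m_def)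
  have "degree G = m"
    using degree_c2_reduced[OF assms(1,2)] by (simp add: G_def m_def)
  then have "E 1 = - (of_nat m * 4 * E 0)"
    using coeff_pred_degree_of_unique_root[of G t 4] only_4 coeff[of t] coeff[of m] m by simp
  moreover have "E 1 * of_nat (k+2) = E 0 * of_nat (k * (k-1))"
    unfolding E_def of_nat_mult[symmetric] c2_coeff_1_eq[OF assms(3)] ..
  \<comment> \<open>writing k = j + 1 lets the simplifier get rid of the truncated subtraction k - 1\<close>
  moreover obtain j where "k = j + 1"
    using assms(3) by (intro that[of "k - 1"]) simp
  ultimately have "E 0 * of_nat (k * (k-1) + 4 * m * (k+2)) = 0"
    by (simp add: algebra_simps neg_eq_iff_add_eq_0)
  moreover have "E 0 \<noteq> 0"
    using of_nat_c2_coeff_neq_0[OF assms(1,2)] by (simp add: E_def)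
  ultimately have "of_nat (k * (k-1) + 4 * m * (k+2)) = (0::'a)"
    by simp
  then have "6*k+5 dvd k * (k-1) + 4 * m * (k+2)"
    unfolding of_nat_eq_0_iff_char_dvd assms(2) .
  with prime_not_dvd_root_4_defect[OF assms(1,3)] show False
    by (simp add: m_def)
qed

lemma c2_reduced_has_root_ne_0_4:
  assumes "prime (6*k+5)" and "CHAR('a::alg_closed_field) = 6*k+5" and "2 \<le> k"
  shows "\<exists>s::'a. poly (c2_reduced k) s = 0 \<and> s \<noteq> 0 \<and> s \<noteq> 4"
proof -
  have "poly (c2_reduced k) 0 \<noteq> (0::'a)"
    using of_nat_c2_coeff_neq_0[OF assms(1,2), of "k div 2"]
    by (simp add: poly_0_coeff_0 coeff_c2_reduced)
  then show ?thesis
    using c2_reduced_has_root_ne_4[OF assms] by metis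
qed

theorem proposition3p4:
  fixes p :: nat
  assumes "prime p" and "p \<ge> 5" and "p mod 6 = 5"
    and "CHAR('k::field) = p"
  shows "(\<exists>r :: 'k alg_closure. r \<noteq> 0 \<and> r \<noteq> 2 \<and> r \<noteq> -2 \<and>
             poly (map_poly to_ac (c2 p :: 'k poly)) r = 0) \<longleftrightarrow> p \<ge> 17"
proof -
  define k where "k = p div 6"
  have p: "p = 6*k+5"
    using assms(3) unfolding k_def by presburger
  have prime: "prime (6*k+5)" and char: "CHAR('k alg_closure) = 6*k+5"
    using assms(1,4) p by simp_all
  have "(\<exists>r :: 'k alg_closure. r \<noteq> 0 \<and> r \<noteq> 2 \<and> r \<noteq> -2 \<and>
           r ^ (k mod 2) * poly (c2_reduced k) (r\<^sup>2) = 0) \<longleftrightarrow> 2 \<le> k"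
  proof
    assume "\<exists>r :: 'k alg_closure. r \<noteq> 0 \<and> r \<noteq> 2 \<and> r \<noteq> -2 \<and>
              r ^ (k mod 2) * poly (c2_reduced k) (r\<^sup>2) = 0"
    then show "2 \<le> k"
      using poly_c2_reduced_neq_0[OF prime char] by (metis not_le mult_eq_0_iff power_eq_0_iff)
  next
    assume "2 \<le> k"
    then obtain s :: "'k alg_closure" where "poly (c2_reduced k) s = 0" "s \<noteq> 0" "s \<noteq> 4"
      using c2_reduced_has_root_ne_0_4[OF prime char] by blast
    moreover obtain r :: "'k alg_closure" where "r\<^sup>2 = s"
      using nth_root_exists[of 2 s] by auto
    ultimately show "\<exists>r :: 'k alg_closure. r \<noteq> 0 \<and> r \<noteq> 2 \<and> r \<noteq> -2 \<and>
                       r ^ (k mod 2) * poly (c2_reduced k) (r\<^sup>2) = 0"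
      by (intro exI[of _ r]) auto
  qed
  then show ?thesis
    unfolding p map_poly_to_ac_c2 poly_c2 by simp
qed

end
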